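(* Let $X$ be a finite connected poset and $\theta\in\mathcal{M}(X)$. Assume there exist maximal chains $C,D$ of $X$ such that $\theta$ is increasing on $C$ and decreasing on $D$. If $x\in C\cap D$, then $x\in\mathrm{Min}(X)$ or $x\in\mathrm{Max}(X)$.
   Context: $\mathrm{Min}(X)$, $\mathrm{Max}(X)$: minimal and maximal elements. For $x<y$, $e_{xy}$ denotes the incidence-algebra basis element and $B=\{e_{xy}:x<y\}$. For a bijection $\theta:B\to B$ and a maximal chain $C:u_1<\dots<u_m$, $\theta$ is increasing on $C$ if there is a maximal chain $D:v_1<\dots<v_m$ with $\theta(e_{u_iu_j})=e_{v_iv_j}$ for all $i<j$, decreasing if $\theta(e_{u_iu_j})=e_{v_{m-j+1}v_{m-i+1}}$ for all $i<j$. $\mathcal{M}(X)$ is the set of bijections $B\to B$ increasing or decreasing on every maximal chain. *)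

theory Defs
  imports Main
begin

text \<open>The incidence-algebra basis B is identified with the set of pairs (x,y) with x < y,
  the pair (x,y) standing for e_xy.\<close>

definition partial_order_on' :: "'a set \<Rightarrow> ('a \<Rightarrow> 'a \<Rightarrow> bool) \<Rightarrow> bool" where
  "partial_order_on' X le \<longleftrightarrow>
     (\<forall>x\<in>X. le x x) \<and>
     (\<forall>x\<in>X. \<forall>y\<in>X. le x y \<and> le y x \<longrightarrow> x = y) \<and>
     (\<forall>x\<in>X. \<forall>y\<in>X. \<forall>z\<in>X. le x y \<and> le y z \<longrightarrow> le x z)"

definition strict :: "('a \<Rightarrow> 'a \<Rightarrow> bool) \<Rightarrow> 'a \<Rightarrow> 'a \<Rightarrow> bool" where
  "strict le x y \<longleftrightarrow> le x y \<and> x \<noteq> y"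

definition basis :: "'a set \<Rightarrow> ('a \<Rightarrow> 'a \<Rightarrow> bool) \<Rightarrow> ('a \<times> 'a) set" where
  "basis X le = {(x, y). x \<in> X \<and> y \<in> X \<and> strict le x y}"

definition poset_connected :: "'a set \<Rightarrow> ('a \<Rightarrow> 'a \<Rightarrow> bool) \<Rightarrow> bool" where
  "poset_connected X le \<longleftrightarrow> X \<noteq> {} \<and>
     (\<forall>x\<in>X. \<forall>y\<in>X. (x, y) \<in> ({(a, b). a \<in> X \<and> b \<in> X \<and> (le a b \<or> le b a)})\<^sup>*)"

definition is_chain :: "'a set \<Rightarrow> ('a \<Rightarrow> 'a \<Rightarrow> bool) \<Rightarrow> 'a set \<Rightarrow> bool" where
  "is_chain X le C \<longleftrightarrow> C \<subseteq> X \<and> (\<forall>x\<in>C. \<forall>y\<in>C. le x y \<or> le y x)"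

definition maximal_chain :: "'a set \<Rightarrow> ('a \<Rightarrow> 'a \<Rightarrow> bool) \<Rightarrow> 'a set \<Rightarrow> bool" where
  "maximal_chain X le C \<longleftrightarrow> is_chain X le C \<and> (\<forall>D. is_chain X le D \<and> C \<subseteq> D \<longrightarrow> D = C)"

definition enumerates :: "('a \<Rightarrow> 'a \<Rightarrow> bool) \<Rightarrow> 'a set \<Rightarrow> 'a list \<Rightarrow> bool" where
  "enumerates le C u \<longleftrightarrow> set u = C \<and> sorted_wrt (strict le) u"

definition increasing_on ::
  "'a set \<Rightarrow> ('a \<Rightarrow> 'a \<Rightarrow> bool) \<Rightarrow> ('a \<times> 'a \<Rightarrow> 'a \<times> 'a) \<Rightarrow> 'a set \<Rightarrow> bool" where
  "increasing_on X le \<theta> C \<longleftrightarrow>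
     (\<forall>u. enumerates le C u \<longrightarrow>
        (\<exists>D v. maximal_chain X le D \<and> enumerates le D v \<and> length v = length u \<and>
           (\<forall>i j. i < j \<and> j < length u \<longrightarrow> \<theta> (u ! i, u ! j) = (v ! i, v ! j))))"

definition decreasing_on ::
  "'a set \<Rightarrow> ('a \<Rightarrow> 'a \<Rightarrow> bool) \<Rightarrow> ('a \<times> 'a \<Rightarrow> 'a \<times> 'a) \<Rightarrow> 'a set \<Rightarrow> bool" where
  "decreasing_on X le \<theta> C \<longleftrightarrow>
     (\<forall>u. enumerates le C u \<longrightarrow>
        (\<exists>D v. maximal_chain X le D \<and> enumerates le D v \<and> length v = length u \<and>
           (\<forall>i j. i < j \<and> j < length u \<longrightarrow>
              \<theta> (u ! i, u ! j) = (v ! (length u - 1 - j), v ! (length u - 1 - i)))))"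

definition M_set :: "'a set \<Rightarrow> ('a \<Rightarrow> 'a \<Rightarrow> bool) \<Rightarrow> ('a \<times> 'a \<Rightarrow> 'a \<times> 'a) set" where
  "M_set X le = {\<theta>. bij_betw \<theta> (basis X le) (basis X le) \<and>
     (\<forall>C. maximal_chain X le C \<longrightarrow> increasing_on X le \<theta> C \<or> decreasing_on X le \<theta> C)}"

definition Min_el :: "'a set \<Rightarrow> ('a \<Rightarrow> 'a \<Rightarrow> bool) \<Rightarrow> 'a set" where
  "Min_el X le = {x \<in> X. \<not> (\<exists>y\<in>X. strict le y x)}"

definition Max_el :: "'a set \<Rightarrow> ('a \<Rightarrow> 'a \<Rightarrow> bool) \<Rightarrow> 'a set" where
  "Max_el X le = {x \<in> X. \<not> (\<exists>y\<in>X. strict le x y)}"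

end

theory Submission
  imports Defs
begin

text \<open>Let \<open>a\<close> be the least element of \<open>C\<close> and \<open>b\<close> the greatest element of \<open>D\<close>. If \<open>x\<close> is
  neither minimal nor maximal then \<open>a < x < b\<close>, and the part of \<open>C\<close> below \<open>x\<close> together
  with the part of \<open>D\<close> above \<open>x\<close> is a maximal chain \<open>E\<close> through \<open>a\<close>, \<open>x\<close>, \<open>b\<close>.
  Since \<open>\<theta>\<close> is increasing on \<open>C\<close>, it maps \<open>e\<^sub>a\<^sub>x\<close> to some \<open>e\<^sub>p\<^sub>q\<close> with \<open>p\<close> minimal in \<open>X\<close>;
  since it is decreasing on \<open>D\<close>, it maps \<open>e\<^sub>x\<^sub>b\<close> to some \<open>e\<^sub>r\<^sub>s\<close> with \<open>r\<close> minimal. As \<open>p < q\<close>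
  and \<open>r < s\<close>, neither \<open>q\<close> nor \<open>s\<close> is minimal. But on \<open>E\<close> the map is increasing, forcing
  \<open>q = r\<close>, or decreasing, forcing \<open>p = s\<close>.\<close>

locale poset =
  fixes X :: "'a set" and le :: "'a \<Rightarrow> 'a \<Rightarrow> bool"
  assumes partial_order: "partial_order_on' X le"
begin

lemma le_refl_on: "x \<in> X \<Longrightarrow> le x x"
  using partial_order unfolding partial_order_on'_def by blast

lemma le_antisym_on: "\<lbrakk>x \<in> X; y \<in> X; le x y; le y x\<rbrakk> \<Longrightarrow> x = y"
  using partial_order unfolding partial_order_on'_def by blast

lemma le_trans_on: "\<lbrakk>x \<in> X; y \<in> X; z \<in> X; le x y; le y z\<rbrakk> \<Longrightarrow> le x z"
  using partial_order unfolding partial_order_on'_def by blast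

lemma strict_trans_on:
  assumes "x \<in> X" "y \<in> X" "z \<in> X" "strict le x y" "strict le y z"
  shows "strict le x z"
  using assms le_antisym_on[of x y] le_trans_on[of x y z] le_trans_on[of z x y]
  unfolding strict_def by blast

lemma poset_conversep: "poset X le\<inverse>\<inverse>"
  using partial_order unfolding poset_def partial_order_on'_def conversep_iff by blast

lemma sorted_strict_nth_le_iff:
  assumes sorted: "sorted_wrt (strict le) s" and "set s \<subseteq> X"
    and i: "i < length s" and j: "j < length s"
  shows "le (s ! i) (s ! j) \<longleftrightarrow> i \<le> j"
proof
  have mem: "s ! i \<in> X" "s ! j \<in> X" using assms(2) i j nth_mem by blast+
  show "i \<le> j" if "le (s ! i) (s ! j)"
  proof (rule ccontr)
    assume "\<not> i \<le> j"
    then have "strict le (s ! j) (s ! i)" using sorted i sorted_wrt_nth_less by fastforce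
    with that mem show False unfolding strict_def using le_antisym_on by blast
  qed
  show "le (s ! i) (s ! j)" if "i \<le> j"
  proof (cases "i = j")
    case True
    then show ?thesis using mem le_refl_on by simp
  next
    case False
    then show ?thesis using that j sorted_wrt_nth_less[OF sorted] unfolding strict_def by simp
  qed
qed

lemma sorted_strict_nth_less_iff:
  assumes "sorted_wrt (strict le) s" "set s \<subseteq> X" "i < length s" "j < length s"
  shows "strict le (s ! i) (s ! j) \<longleftrightarrow> i < j"
  using sorted_strict_nth_le_iff[OF assms] sorted_strict_nth_le_iff[OF assms(1,2,4,3)]
  unfolding strict_def by auto

lemma finite_chain_enumerable:
  assumes "finite S" "is_chain X le S"
  shows "\<exists>s. enumerates le S s"
  using assms
proof (induction S rule: finite_induct)
  case empty
  then show ?case by (simp add: enumerates_def)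
next
  case (insert a S)
  then have aX: "a \<in> X" and SX: "S \<subseteq> X" and "is_chain X le S"
    unfolding is_chain_def by auto
  then obtain s where s: "set s = S" "sorted_wrt (strict le) s"
    using insert.IH unfolding enumerates_def by blast
  have comparable: "strict le c a \<or> strict le a c" if "c \<in> S" for c
    using insert.prems insert.hyps that unfolding is_chain_def strict_def by auto
  define s' where "s' = filter (\<lambda>c. strict le c a) s @ a # filter (\<lambda>c. strict le a c) s"
  have "set s' = insert a S"
    using s comparable unfolding s'_def by auto
  moreover have "sorted_wrt (strict le) s'"
    unfolding s'_def sorted_wrt_append
  proof (intro conjI ballI)
    fix b c
    assume "b \<in> set (filter (\<lambda>c. strict le c a) s)" "c \<in> set (a # filter (\<lambda>c. strict le a c) s)"
    then show "strict le b c" using s aX SX strict_trans_on[of b a c] by auto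
  qed (use s in \<open>simp_all add: sorted_wrt_filter\<close>)
  ultimately show ?case unfolding enumerates_def by blast
qed

lemma enumeration_first_least:
  assumes "enumerates le S s" "S \<subseteq> X" "s \<noteq> []"
  shows "\<forall>c\<in>S. le (s ! 0) c"
  using assms sorted_strict_nth_le_iff[of s 0] unfolding enumerates_def by (auto simp: in_set_conv_nth)

lemma finite_chain_has_least:
  assumes "finite S" "is_chain X le S" "S \<noteq> {}"
  shows "\<exists>a\<in>S. \<forall>c\<in>S. le a c"
proof -
  obtain s where s: "enumerates le S s" using finite_chain_enumerable assms(1,2) by blast
  then have ne: "s \<noteq> []" using assms(3) unfolding enumerates_def by auto
  then have "s ! 0 \<in> S" using s nth_mem[of 0 s] unfolding enumerates_def by simp
  then show ?thesis using enumeration_first_least[OF s _ ne] assms(2) unfolding is_chain_def by blast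
qed

lemma maximal_chain_memI:
  assumes "maximal_chain X le S" "y \<in> X" "\<forall>c\<in>S. le y c \<or> le c y"
  shows "y \<in> S"
proof -
  have "is_chain X le (insert y S)"
    using assms le_refl_on unfolding maximal_chain_def is_chain_def by auto
  then show ?thesis using assms(1) unfolding maximal_chain_def by blast
qed

lemma maximal_chain_least_in_Min_el:
  assumes S: "maximal_chain X le S" and "a \<in> S" and least: "\<forall>c\<in>S. le a c"
  shows "a \<in> Min_el X le"
proof (rule ccontr)
  have SX: "S \<subseteq> X" using S unfolding maximal_chain_def is_chain_def by auto
  with \<open>a \<in> S\<close> have aX: "a \<in> X" by auto
  assume "a \<notin> Min_el X le"
  then obtain y where yX: "y \<in> X" and ya: "le y a" "y \<noteq> a"
    using aX unfolding Min_el_def strict_def by auto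
  have "le y c" if "c \<in> S" for c
    using le_trans_on[OF yX aX] ya least that SX by blast
  then have "y \<in> S" using maximal_chain_memI[OF S yX] by blast
  then show False using least ya le_antisym_on[OF yX aX] by blast
qed

lemma maximal_chain_lower_memI:
  assumes S: "maximal_chain X le S" and xS: "x \<in> S" and yX: "y \<in> X" and yx: "le y x"
    and comparable: "\<forall>c\<in>S. le c x \<longrightarrow> le y c \<or> le c y"
  shows "y \<in> S"
proof -
  have SX: "S \<subseteq> X" and chain: "\<forall>c\<in>S. le x c \<or> le c x"
    using S xS unfolding maximal_chain_def is_chain_def by auto
  have "le y c" if "c \<in> S" "\<not> le c x" for c
    using chain that le_trans_on[OF yX _ _ yx, of c] xS SX by blast
  then show ?thesis using maximal_chain_memI[OF S yX] comparable by blast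
qed

end

lemma is_chain_conversep [simp]: "is_chain X le\<inverse>\<inverse> S = is_chain X le S"
  unfolding is_chain_def by auto

lemma maximal_chain_conversep [simp]: "maximal_chain X le\<inverse>\<inverse> S = maximal_chain X le S"
  unfolding maximal_chain_def by simp

lemma Min_el_conversep [simp]: "Min_el X le\<inverse>\<inverse> = Max_el X le"
  unfolding Min_el_def Max_el_def strict_def by auto

lemma basis_snd_notin_Min_el: "p \<in> basis X le \<Longrightarrow> snd p \<notin> Min_el X le"
  unfolding basis_def Min_el_def by auto

context poset
begin

lemma finite_chain_has_greatest:
  assumes "finite S" "is_chain X le S" "S \<noteq> {}"
  shows "\<exists>b\<in>S. \<forall>c\<in>S. le c b"
  using poset.finite_chain_has_least[OF poset_conversep] assms by simp

lemma maximal_chain_greatest_in_Max_el: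
  assumes "maximal_chain X le S" "b \<in> S" "\<forall>c\<in>S. le c b"
  shows "b \<in> Max_el X le"
  using poset.maximal_chain_least_in_Min_el[OF poset_conversep] assms by simp

lemma maximal_chain_upper_memI:
  assumes "maximal_chain X le S" "x \<in> S" "y \<in> X" "le x y"
    and "\<forall>c\<in>S. le x c \<longrightarrow> le y c \<or> le c y"
  shows "y \<in> S"
  using poset.maximal_chain_lower_memI[OF poset_conversep, of S x y] assms by auto

lemma maximal_chain_splice:
  assumes C: "maximal_chain X le C" and D: "maximal_chain X le D" and x: "x \<in> C" "x \<in> D"
  shows "maximal_chain X le ({c \<in> C. le c x} \<union> {d \<in> D. le x d})"
    (is "maximal_chain X le ?E")
proof -
  have CX: "C \<subseteq> X" and DX: "D \<subseteq> X" and xX: "x \<in> X"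
    and chainC: "\<forall>a\<in>C. \<forall>b\<in>C. le a b \<or> le b a" and chainD: "\<forall>a\<in>D. \<forall>b\<in>D. le a b \<or> le b a"
    using C D x unfolding maximal_chain_def is_chain_def by auto
  have across: "le c d" if "c \<in> C" "le c x" "d \<in> D" "le x d" for c d
    using le_trans_on[OF _ xX, of c d] that CX DX by blast
  have E: "is_chain X le ?E"
    unfolding is_chain_def
  proof (intro conjI ballI)
    show "?E \<subseteq> X" using CX DX by auto
    fix a b
    assume "a \<in> ?E" "b \<in> ?E"
    then show "le a b \<or> le b a" using chainC chainD across by auto
  qed
  have "y \<in> ?E" if F: "is_chain X le F" "?E \<subseteq> F" and "y \<in> F" for F y
  proof -
    have yX: "y \<in> X" and comparable: "\<forall>c\<in>?E. le y c \<or> le c y"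
      using F \<open>y \<in> F\<close> unfolding is_chain_def by blast+
    have "x \<in> ?E" using x le_refl_on[OF xX] by blast
    then consider "le y x" | "le x y" using comparable by blast
    then show "y \<in> ?E"
    proof cases
      case 1
      moreover have "\<forall>c\<in>C. le c x \<longrightarrow> le y c \<or> le c y" using comparable by simp
      ultimately have "y \<in> C" using maximal_chain_lower_memI[OF C x(1) yX] by blast
      with 1 show ?thesis by blast
    next
      case 2
      moreover have "\<forall>d\<in>D. le x d \<longrightarrow> le y d \<or> le d y" using comparable by simp
      ultimately have "y \<in> D" using maximal_chain_upper_memI[OF D x(2) yX] by blast
      with 2 show ?thesis by blast
    qed
  qed
  with E show ?thesis unfolding maximal_chain_def by blast
qed

lemma maximal_chain_enumeration_first_in_Min_el:
  assumes "maximal_chain X le D" "enumerates le D v" "v \<noteq> []"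
  shows "v ! 0 \<in> Min_el X le"
proof -
  have "D \<subseteq> X" "v ! 0 \<in> D" using assms unfolding maximal_chain_def is_chain_def enumerates_def by auto
  then show ?thesis
    using maximal_chain_least_in_Min_el[OF assms(1)] enumeration_first_least[OF assms(2) _ assms(3)] by blast
qed

lemma increasing_on_snd_eq_fst:
  assumes "finite S" "is_chain X le S" "increasing_on X le \<theta> S"
    and "a \<in> S" "b \<in> S" "c \<in> S" "strict le a b" "strict le b c"
  shows "snd (\<theta> (a, b)) = fst (\<theta> (b, c))"
proof -
  obtain s where s: "enumerates le S s" using finite_chain_enumerable assms(1,2) by blast
  then obtain v where \<theta>: "\<And>i j. i < j \<Longrightarrow> j < length s \<Longrightarrow> \<theta> (s ! i, s ! j) = (v ! i, v ! j)"
    using assms(3) unfolding increasing_on_def by blast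
  have sorted: "sorted_wrt (strict le) s" "set s \<subseteq> X"
    using s assms(2) unfolding enumerates_def is_chain_def by auto
  obtain i j k where ijk: "i < length s" "j < length s" "k < length s" "a = s ! i" "b = s ! j" "c = s ! k"
    using s assms(4-6) unfolding enumerates_def by (metis in_set_conv_nth)
  then have "i < j" "j < k" using sorted_strict_nth_less_iff[OF sorted] assms(7,8) by auto
  with ijk show ?thesis using \<theta> by simp
qed

lemma decreasing_on_fst_eq_snd:
  assumes "finite S" "is_chain X le S" "decreasing_on X le \<theta> S"
    and "a \<in> S" "b \<in> S" "c \<in> S" "strict le a b" "strict le b c"
  shows "fst (\<theta> (a, b)) = snd (\<theta> (b, c))"
proof -
  obtain s where s: "enumerates le S s" using finite_chain_enumerable assms(1,2) by blast
  then obtain v where \<theta>: "\<And>i j. i < j \<Longrightarrow> j < length s \<Longrightarrow>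
      \<theta> (s ! i, s ! j) = (v ! (length s - 1 - j), v ! (length s - 1 - i))"
    using assms(3) unfolding decreasing_on_def by blast
  have sorted: "sorted_wrt (strict le) s" "set s \<subseteq> X"
    using s assms(2) unfolding enumerates_def is_chain_def by auto
  obtain i j k where ijk: "i < length s" "j < length s" "k < length s" "a = s ! i" "b = s ! j" "c = s ! k"
    using s assms(4-6) unfolding enumerates_def by (metis in_set_conv_nth)
  then have "i < j" "j < k" using sorted_strict_nth_less_iff[OF sorted] assms(7,8) by auto
  with ijk show ?thesis using \<theta> by simp
qed

lemma increasing_on_least_fst_in_Min_el:
  assumes "finite S" "is_chain X le S" "increasing_on X le \<theta> S"
    and "a \<in> S" "\<forall>c\<in>S. le a c" "b \<in> S" "strict le a b"
  shows "fst (\<theta> (a, b)) \<in> Min_el X le"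
proof -
  obtain s where s: "enumerates le S s" using finite_chain_enumerable assms(1,2) by blast
  then obtain D v where D: "maximal_chain X le D" "enumerates le D v" "length v = length s"
    and \<theta>: "\<And>i j. i < j \<Longrightarrow> j < length s \<Longrightarrow> \<theta> (s ! i, s ! j) = (v ! i, v ! j)"
    using assms(3) unfolding increasing_on_def by blast
  have sorted: "sorted_wrt (strict le) s" "set s \<subseteq> X"
    using s assms(2) unfolding enumerates_def is_chain_def by auto
  obtain i j where ij: "i < length s" "j < length s" "a = s ! i" "b = s ! j"
    using s assms(4,6) unfolding enumerates_def by (metis in_set_conv_nth)
  then have "0 < length s" by linarith
  then have "i = 0"
    using sorted_strict_nth_le_iff[OF sorted ij(1), of 0] s ij assms(5) unfolding enumerates_def by auto
  moreover have "i < j" using sorted_strict_nth_less_iff[OF sorted ij(1,2)] ij assms(7) by simp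
  ultimately have "fst (\<theta> (a, b)) = v ! 0" using \<theta> ij by simp
  also have "\<dots> \<in> Min_el X le"
    using maximal_chain_enumeration_first_in_Min_el[OF D(1,2)] D(3) ij(1) by fastforce
  finally show ?thesis .
qed

lemma decreasing_on_greatest_fst_in_Min_el:
  assumes "finite S" "is_chain X le S" "decreasing_on X le \<theta> S"
    and "a \<in> S" "\<forall>c\<in>S. le c a" "b \<in> S" "strict le b a"
  shows "fst (\<theta> (b, a)) \<in> Min_el X le"
proof -
  obtain s where s: "enumerates le S s" using finite_chain_enumerable assms(1,2) by blast
  then obtain D v where D: "maximal_chain X le D" "enumerates le D v" "length v = length s"
    and \<theta>: "\<And>i j. i < j \<Longrightarrow> j < length s \<Longrightarrow>
      \<theta> (s ! i, s ! j) = (v ! (length s - 1 - j), v ! (length s - 1 - i))"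
    using assms(3) unfolding decreasing_on_def by blast
  have sorted: "sorted_wrt (strict le) s" "set s \<subseteq> X"
    using s assms(2) unfolding enumerates_def is_chain_def by auto
  obtain i j where ij: "i < length s" "j < length s" "b = s ! i" "a = s ! j"
    using s assms(4,6) unfolding enumerates_def by (metis in_set_conv_nth)
  then have "s ! (length s - 1) \<in> S" using s nth_mem[of "length s - 1" s] unfolding enumerates_def by simp
  moreover have "length s - 1 < length s" using ij(2) by simp
  ultimately have "j = length s - 1"
    using sorted_strict_nth_le_iff[OF sorted _ ij(2), of "length s - 1"] ij assms(5) by auto
  moreover have "i < j" using sorted_strict_nth_less_iff[OF sorted ij(1,2)] ij assms(7) by simp
  ultimately have "fst (\<theta> (b, a)) = v ! 0" using \<theta> ij by simp
  also have "\<dots> \<in> Min_el X le"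
    using maximal_chain_enumeration_first_in_Min_el[OF D(1,2)] D(3) ij(1) by fastforce
  finally show ?thesis .
qed

end

theorem lemma3p4:
  fixes X :: "'a set" and le :: "'a \<Rightarrow> 'a \<Rightarrow> bool"
    and \<theta> :: "'a \<times> 'a \<Rightarrow> 'a \<times> 'a" and C D :: "'a set" and x :: 'a
  assumes "finite X" and "partial_order_on' X le" and "poset_connected X le"
    and "\<theta> \<in> M_set X le"
    and "maximal_chain X le C" and "maximal_chain X le D"
    and "increasing_on X le \<theta> C" and "decreasing_on X le \<theta> D"
    and "x \<in> C \<inter> D"
  shows "x \<in> Min_el X le \<or> x \<in> Max_el X le"
proof (rule ccontr)
  interpret poset X le by (rule poset.intro) fact
  assume not_extremal: "\<not> (x \<in> Min_el X le \<or> x \<in> Max_el X le)"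
  have chains: "is_chain X le C" "is_chain X le D" "finite C" "finite D" and "x \<in> X"
    using assms(1,5,6,9) unfolding maximal_chain_def is_chain_def by (auto intro: finite_subset)
  obtain a where a: "a \<in> C" "\<forall>c\<in>C. le a c" using finite_chain_has_least chains assms(9) by blast
  obtain b where b: "b \<in> D" "\<forall>d\<in>D. le d b" using finite_chain_has_greatest chains assms(9) by blast
  have "a \<in> Min_el X le" "b \<in> Max_el X le"
    using maximal_chain_least_in_Min_el maximal_chain_greatest_in_Max_el assms(5,6) a b by blast+
  then have ax: "strict le a x" and xb: "strict le x b"
    using not_extremal a b assms(9) unfolding strict_def by auto
  define E where "E = {c \<in> C. le c x} \<union> {d \<in> D. le x d}"
  have "maximal_chain X le E" unfolding E_def using maximal_chain_splice assms(5,6,9) by blast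
  then have E: "maximal_chain X le E" "is_chain X le E" "finite E"
    using assms(1) unfolding maximal_chain_def is_chain_def by (auto intro: finite_subset)
  have abx: "a \<in> E" "x \<in> E" "b \<in> E"
    using a b ax xb assms(9) le_refl_on \<open>x \<in> X\<close> unfolding E_def strict_def by auto
  have "(a, x) \<in> basis X le" "(x, b) \<in> basis X le"
    using ax xb chains(1,2) a b assms(9) unfolding basis_def is_chain_def by auto
  then have snd_not_Min: "snd (\<theta> (a, x)) \<notin> Min_el X le" "snd (\<theta> (x, b)) \<notin> Min_el X le"
    using assms(4) unfolding M_set_def by (auto dest: bij_betw_apply basis_snd_notin_Min_el)
  have fst_Min: "fst (\<theta> (a, x)) \<in> Min_el X le" "fst (\<theta> (x, b)) \<in> Min_el X le"
    using increasing_on_least_fst_in_Min_el[OF chains(3,1) assms(7) a _ ax]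
      decreasing_on_greatest_fst_in_Min_el[OF chains(4,2) assms(8) b _ xb] assms(9) by auto
  have "increasing_on X le \<theta> E \<or> decreasing_on X le \<theta> E"
    using assms(4) E(1) unfolding M_set_def by blast
  moreover have "increasing_on X le \<theta> E \<Longrightarrow> snd (\<theta> (a, x)) = fst (\<theta> (x, b))"
    using increasing_on_snd_eq_fst[OF E(3,2) _ abx ax xb] .
  moreover have "decreasing_on X le \<theta> E \<Longrightarrow> fst (\<theta> (a, x)) = snd (\<theta> (x, b))"
    using decreasing_on_fst_eq_snd[OF E(3,2) _ abx ax xb] .
  ultimately show False using snd_not_Min fst_Min by auto
qed

end
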